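(* Under the hypotheses of Theorem 3 (A1, A2, A3(S), $\beta\in[0,1)$, $0<\eta<(\frac{H\beta\sigma_{\max}^3}{\sqrt{Nb}\gamma(1-\beta)}+\frac{H\sigma_{\max}^4}{2b\gamma^2})^{-1}$), the SGDM-with-replacement iterates satisfy $\sum_{t=1}^\infty\mathbb{E}\|\nabla\mathcal{L}(w(t))\|^2<\infty$. Consequently, almost surely, $\sum_{t=1}^\infty\|\nabla\mathcal{L}(w(t))\|^2<\infty$ and $\langle w(t),x\rangle\to\infty$ for every $x\in S$.
   Context: Setting. The data are $S=\{x_1,\dots,x_N\}\subset\mathbb{R}^d$, with labels absorbed. $\mathcal{L}(w)=\frac1N\sum_i\ell(\langle w,x_i\rangle)$ and $\mathcal{L}_B(w)=\frac1b\sum_{x\in B}\ell(\langle w,x\rangle)$. $\sigma_{\max}$ is the spectral norm of $(x_1,\dots,x_N)$. A1: there is $w$ with $\langle w,x_i\rangle>0$ for all $i$. A2: $\ell$ is differentiable, $\ell'<0$, $\ell(x),\ell'(x)\to0$ as $x\to\infty$, and $\limsup_{x\to-\infty}\ell'(x)<0$. There are positive $\mu_\pm,x_\pm$ with $-\ell'(x)\le(1+e^{-\mu_+x})e^{-x}$ for $x>x_+$ and $-\ell'(x)\ge(1-e^{-\mu_-x})e^{-x}$ for $x>x_-$. A3(S): $|\ell'(x)-\ell'(y)|\le H|x-y|$ for all $x,y$. Max-margin: $\hat w=\arg\min\{\|w\|^2:\langle w,x_i\rangle\ge1\ \forall i\}$ and $\gamma=1/\|\hat w\|$. SGDM with replacement: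 i.i.d. uniform size-$b$ batches $B(t)\subseteq S$; $m(0)=0$, $m(t)=\beta m(t-1)+(1-\beta)\nabla\mathcal{L}_{B(t)}(w(t))$ and $w(t+1)=w(t)-\eta m(t)$. *)

theory Defs
  imports "HOL-Probability.Probability"
begin

definition full_grad :: "(real \<Rightarrow> real) \<Rightarrow> nat \<Rightarrow> (nat \<Rightarrow> 'a::euclidean_space) \<Rightarrow> 'a \<Rightarrow> 'a" where
  "full_grad dl N x w = (1 / real N) *\<^sub>R (\<Sum>i<N. dl (inner w (x i)) *\<^sub>R x i)"

definition batch_grad :: "(real \<Rightarrow> real) \<Rightarrow> nat \<Rightarrow> (nat \<Rightarrow> 'a::euclidean_space) \<Rightarrow> nat set \<Rightarrow> 'a \<Rightarrow> 'a" where
  "batch_grad dl b x B w = (1 / real b) *\<^sub>R (\<Sum>i\<in>B. dl (inner w (x i)) *\<^sub>R x i)"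

definition batches :: "nat \<Rightarrow> nat \<Rightarrow> nat set set" where
  "batches N b = {B. B \<subseteq> {..<N} \<and> card B = b}"

text \<open>Probability space of i.i.d. uniform size-b batches (the component at time 0 is unused).\<close>
definition batch_space :: "nat \<Rightarrow> nat \<Rightarrow> (nat \<Rightarrow> nat set) measure" where
  "batch_space N b = (\<Pi>\<^sub>M t\<in>(UNIV::nat set). measure_pmf (pmf_of_set (batches N b)))"

text \<open>SGDM state (w(t), m(t)); batch B(t) = \<omega> t for t \<ge> 1.\<close>
primrec sgdm_state :: "(real \<Rightarrow> real) \<Rightarrow> nat \<Rightarrow> (nat \<Rightarrow> 'a::euclidean_space) \<Rightarrow> real \<Rightarrow> real
    \<Rightarrow> 'a \<Rightarrow> (nat \<Rightarrow> nat set) \<Rightarrow> nat \<Rightarrow> 'a \<times> 'a" where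
  "sgdm_state dl b x \<beta> \<eta> w0 \<omega> 0 = (w0, 0)"
| "sgdm_state dl b x \<beta> \<eta> w0 \<omega> (Suc t) =
     (let w' = fst (sgdm_state dl b x \<beta> \<eta> w0 \<omega> t) - \<eta> *\<^sub>R snd (sgdm_state dl b x \<beta> \<eta> w0 \<omega> t)
      in (w', \<beta> *\<^sub>R snd (sgdm_state dl b x \<beta> \<eta> w0 \<omega> t) + (1 - \<beta>) *\<^sub>R batch_grad dl b x (\<omega> (Suc t)) w'))"

definition sgdm_w :: "(real \<Rightarrow> real) \<Rightarrow> nat \<Rightarrow> (nat \<Rightarrow> 'a::euclidean_space) \<Rightarrow> real \<Rightarrow> real
    \<Rightarrow> 'a \<Rightarrow> (nat \<Rightarrow> nat set) \<Rightarrow> nat \<Rightarrow> 'a" where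
  "sgdm_w dl b x \<beta> \<eta> w0 \<omega> t = fst (sgdm_state dl b x \<beta> \<eta> w0 \<omega> t)"

text \<open>Spectral norm of the d x N data matrix (x_1,...,x_N): operator 2-norm.\<close>
definition sigma_max :: "nat \<Rightarrow> (nat \<Rightarrow> 'a::euclidean_space) \<Rightarrow> real" where
  "sigma_max N x = Sup {norm (\<Sum>i<N. v i *\<^sub>R x i) | v. (\<Sum>i<N. (v i)\<^sup>2) \<le> 1}"

definition max_margin :: "nat \<Rightarrow> (nat \<Rightarrow> 'a::euclidean_space) \<Rightarrow> 'a" where
  "max_margin N x = (THE w. (\<forall>i<N. inner w (x i) \<ge> 1) \<and>
      (\<forall>v. (\<forall>i<N. inner v (x i) \<ge> 1) \<longrightarrow> (norm w)\<^sup>2 \<le> (norm v)\<^sup>2))"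

definition margin :: "nat \<Rightarrow> (nat \<Rightarrow> 'a::euclidean_space) \<Rightarrow> real" where
  "margin N x = 1 / norm (max_margin N x)"

end

theory Submission
  imports Defs
begin

text \<open>
  SGDM is analysed through the shadow iterate v(t) = w(t+1) - \<eta>\<beta>/(1-\<beta>) m(t), which performs
  plain SGD: v(t+1) = v(t) - \<eta> g(t), with g(t) the minibatch gradient at w(t+1).
  The loss L is K-smooth with K = H \<sigma>^2/N, the minibatch gradient is unbiased, and its second
  moment is at most c1 \<parallel>\<nabla>L\<parallel>^2, because pairing \<nabla>L with the max-margin vector controls every
  -\<ell>'(\<langle>w,x_i\<rangle>). The momentum only enters through the gap
  \<parallel>\<nabla>L(v(t)) - \<nabla>L(w(t+1))\<parallel> \<le> K \<eta>\<beta>/(1-\<beta>) \<parallel>m(t)\<parallel>, and \<parallel>m\<parallel>^2 obeys a convex recursion. Hence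
  E L(v(t)) + \<alpha> E \<parallel>m(t)\<parallel>^2 decreases by \<eta>\<delta> E \<parallel>\<nabla>L(w(t+1))\<parallel>^2 per step, where \<delta> > 0 is exactly the
  step-size condition, and telescoping bounds the expected sum by L(w(0))/(\<eta>\<delta>). So the sum is
  almost surely finite and \<nabla>L(w(t)) \<rightarrow> 0, hence \<ell>'(\<langle>w(t),x_i\<rangle>) \<rightarrow> 0; as \<ell>' is bounded away
  from 0 on every half-line (-\<infinity>, Z], this forces \<langle>w(t),x_i\<rangle> \<rightarrow> \<infinity>.
\<close>

lemma deriv_lipschitz_quadratic_upper_bound:
  fixes l dl :: "real \<Rightarrow> real"
  assumes deriv: "\<And>u. (l has_real_derivative dl u) (at u)"
    and lip: "\<And>u v. \<bar>dl u - dl v\<bar> \<le> H * \<bar>u - v\<bar>"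
  shows "l v \<le> l u + dl u * (v - u) + H / 2 * (v - u)^2"
proof -
  define h where "h y = l y - l u - dl u * (y - u) - H/2 * (y - u)^2" for y
  have h_deriv: "(h has_real_derivative (dl y - dl u - H * (y - u))) (at y)" for y
    unfolding h_def
    by (auto intro!: derivative_eq_intros deriv simp: power2_eq_square algebra_simps)
  have "h v \<le> h u"
  proof (cases "u \<le> v")
    case True
    show ?thesis
    proof (rule DERIV_nonpos_imp_nonincreasing[OF True])
      fix y assume "u \<le> y"
      then have "dl y - dl u \<le> H * (y - u)" using lip[of y u] by auto
      then show "\<exists>d. (h has_real_derivative d) (at y) \<and> d \<le> 0"
        using h_deriv[of y] by (intro exI[of _ "dl y - dl u - H * (y - u)"]) auto
    qed
  next
    case False
    show ?thesis
    proof (rule DERIV_nonneg_imp_nondecreasing[of v u])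
      show "v \<le> u" using False by simp
    next
      fix y assume "y \<le> u"
      then have "dl u - dl y \<le> H * (u - y)" using lip[of u y] by auto
      then show "\<exists>d. (h has_real_derivative d) (at y) \<and> 0 \<le> d"
        using h_deriv[of y] by (intro exI[of _ "dl y - dl u - H * (y - u)"]) (auto simp: algebra_simps)
    qed
  qed
  then show ?thesis by (simp add: h_def)
qed

lemma sum_power2_le_power2_sum:
  fixes a :: "'i \<Rightarrow> real"
  assumes "finite I" "\<And>i. i \<in> I \<Longrightarrow> 0 \<le> a i"
  shows "(\<Sum>i\<in>I. (a i)^2) \<le> (\<Sum>i\<in>I. a i)^2"
  using assms
proof (induction I rule: finite_induct)
  case (insert j F)
  have "0 \<le> a j" "0 \<le> sum a F" using insert.prems by (auto intro: sum_nonneg)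
  then have "0 \<le> 2 * a j * sum a F" by simp
  then show ?case using insert by (simp add: power2_eq_square algebra_simps)
qed simp

lemma power2_norm_convex_combination_le:
  fixes p q :: "'a::real_normed_vector"
  assumes "0 \<le> \<beta>" "\<beta> \<le> 1"
  shows "(norm (\<beta> *\<^sub>R p + (1 - \<beta>) *\<^sub>R q))^2 \<le> \<beta> * (norm p)^2 + (1 - \<beta>) * (norm q)^2"
proof -
  have "norm (\<beta> *\<^sub>R p + (1 - \<beta>) *\<^sub>R q) \<le> \<beta> * norm p + (1 - \<beta>) * norm q"
    using norm_triangle_ineq[of "\<beta> *\<^sub>R p" "(1 - \<beta>) *\<^sub>R q"] assms by simp
  then have "(norm (\<beta> *\<^sub>R p + (1 - \<beta>) *\<^sub>R q))^2 \<le> (\<beta> * norm p + (1 - \<beta>) * norm q)^2"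
    by (intro power_mono) auto
  also have "\<dots> = \<beta> * (norm p)^2 + (1 - \<beta>) * (norm q)^2 - \<beta> * (1 - \<beta>) * (norm p - norm q)^2"
    by (simp add: power2_eq_square algebra_simps)
  also have "\<dots> \<le> \<beta> * (norm p)^2 + (1 - \<beta>) * (norm q)^2"
    using assms by simp
  finally show ?thesis .
qed

lemma mult_le_weighted_power2_sum:
  fixes p q :: real
  assumes "0 < r"
  shows "p * q \<le> p^2 / (2 * r) + r * q^2 / 2"
proof -
  have "2 * r * (p * q) \<le> p^2 + r^2 * q^2"
    using zero_le_power2[of "p - r * q"] by (simp add: power2_eq_square algebra_simps)
  then show ?thesis
    using assms by (simp add: field_simps power2_eq_square)
qed

lemma filterlim_at_top_if_comp_tendsto_0:
  fixes f :: "real \<Rightarrow> real" and q :: "nat \<Rightarrow> real"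
  assumes cont: "continuous_on UNIV f" and neg: "\<And>u. f u < 0"
    and limsup: "Limsup at_bot (\<lambda>u. ereal (f u)) < 0"
    and lim: "(\<lambda>k. f (q k)) \<longlonglongrightarrow> 0"
  shows "filterlim q at_top sequentially"
  unfolding filterlim_at_top
proof
  fix Z :: real
  obtain c :: real where c: "Limsup at_bot (\<lambda>u. ereal (f u)) < ereal c" "c < 0"
    using ereal_dense2[OF limsup] by auto
  have "eventually (\<lambda>u. ereal (f u) < ereal c) at_bot" by (rule Limsup_lessD[OF c(1)])
  then obtain R where R: "\<And>u. u \<le> R \<Longrightarrow> f u < c" by (auto simp: eventually_at_bot_linorder)
  obtain m where m: "m \<in> {min R Z..Z}" "\<forall>y\<in>{min R Z..Z}. f y \<le> f m"
    using continuous_attains_sup[of "{min R Z..Z}" f] continuous_on_subset[OF cont] by auto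
  define e where "e = max c (f m)"
  have e_neg: "e < 0" using c(2) neg[of m] by (simp add: e_def)
  have below_e: "f u \<le> e" if "u \<le> Z" for u
  proof (cases "u \<le> R")
    case True
    then show ?thesis using R[of u] by (simp add: e_def)
  next
    case False
    then have "u \<in> {min R Z..Z}" using that by auto
    then have "f u \<le> f m" using m(2) by blast
    then show ?thesis by (simp add: e_def)
  qed
  have "eventually (\<lambda>k. e < f (q k)) sequentially"
    using order_tendstoD(1)[OF lim e_neg] .
  then show "eventually (\<lambda>k. Z \<le> q k) sequentially"
  proof (rule eventually_mono)
    fix k assume "e < f (q k)"
    then show "Z \<le> q k" using below_e[of "q k"] by (cases "q k \<le> Z") auto
  qed
qed

section \<open>The data and the loss\<close>

lemma sigma_max_bound:
  fixes x :: "nat \<Rightarrow> 'a::euclidean_space"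
  shows "norm (\<Sum>i<N. a i *\<^sub>R x i) \<le> sigma_max N x * sqrt (\<Sum>i<N. (a i)^2)"
proof -
  define Q where "Q = {norm (\<Sum>i<N. v i *\<^sub>R x i) | v. (\<Sum>i<N. (v i)\<^sup>2) \<le> 1}"
  have bdd: "bdd_above Q"
  proof (rule bdd_aboveI)
    fix q assume "q \<in> Q"
    then obtain v where v: "q = norm (\<Sum>i<N. v i *\<^sub>R x i)" "(\<Sum>i<N. (v i)\<^sup>2) \<le> 1"
      by (auto simp: Q_def)
    have "q \<le> (\<Sum>i<N. norm (v i *\<^sub>R x i))" unfolding v(1) by (rule norm_sum)
    also have "\<dots> \<le> (\<Sum>i<N. norm (x i))"
    proof (rule sum_mono)
      fix i assume i: "i \<in> {..<N}"
      have "(v i)\<^sup>2 \<le> (\<Sum>j<N. (v j)\<^sup>2)" by (rule member_le_sum) (use i in auto)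
      then have "(v i)\<^sup>2 \<le> 1" using v(2) by simp
      then have "\<bar>v i\<bar> \<le> 1" by (simp add: abs_square_le_1)
      then show "norm (v i *\<^sub>R x i) \<le> norm (x i)" by (simp add: mult_left_le_one_le)
    qed
    finally show "q \<le> (\<Sum>i<N. norm (x i))" .
  qed
  have sigma_max_Q: "sigma_max N x = Sup Q" by (simp add: sigma_max_def Q_def)
  define s where "s = (\<Sum>i<N. (a i)^2)"
  have s_nonneg: "0 \<le> s" by (simp add: s_def sum_nonneg)
  show ?thesis
  proof (cases "s = 0")
    case True
    then have "\<forall>i\<in>{..<N}. a i = 0" unfolding s_def by (subst (asm) sum_nonneg_eq_0_iff) auto
    moreover have "0 \<in> Q" unfolding Q_def by (auto intro: exI[of _ "\<lambda>_. 0"])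
    then have "0 \<le> sigma_max N x" unfolding sigma_max_Q using cSup_upper2[of 0 Q 0] bdd by simp
    ultimately show ?thesis by simp
  next
    case False
    then have sqrt_s_pos: "0 < sqrt s" using s_nonneg by simp
    define v where "v i = a i / sqrt s" for i
    have "(\<Sum>i<N. (v i)\<^sup>2) = s / s"
      using s_nonneg by (simp add: v_def s_def power_divide sum_divide_distrib[symmetric])
    then have "norm (\<Sum>i<N. v i *\<^sub>R x i) \<in> Q" unfolding Q_def using False by auto
    then have "norm (\<Sum>i<N. v i *\<^sub>R x i) \<le> sigma_max N x"
      unfolding sigma_max_Q using bdd by (rule cSup_upper)
    moreover have "(\<Sum>i<N. a i *\<^sub>R x i) = sqrt s *\<^sub>R (\<Sum>i<N. v i *\<^sub>R x i)"
      using sqrt_s_pos by (simp add: v_def scaleR_sum_right)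
    ultimately show ?thesis
      using sqrt_s_pos by (simp add: s_def mult.commute mult_left_mono)
  qed
qed

lemma max_margin_ge_1:
  fixes x :: "nat \<Rightarrow> 'a::euclidean_space"
  assumes separable: "\<exists>w. \<forall>i<N. inner w (x i) > 0"
  shows "i < N \<Longrightarrow> 1 \<le> inner (max_margin N x) (x i)"
proof -
  define S where "S = {w. \<forall>i<N. 1 \<le> inner w (x i)}"
  have S_eq: "S = (\<Inter>i\<in>{..<N}. {w. 1 \<le> inner (x i) w})" by (auto simp: S_def inner_commute)
  have "closed S" unfolding S_eq by (intro closed_INT) (simp add: closed_halfspace_ge)
  have "convex S" unfolding S_eq by (intro convex_INT) (simp add: convex_halfspace_ge)
  have "S \<noteq> {}"
  proof (cases "N = 0")
    case True then show ?thesis by (auto simp: S_def)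
  next
    case False
    obtain w where w: "\<forall>i<N. inner w (x i) > 0" using separable by blast
    define \<mu> where "\<mu> = Min ((\<lambda>i. inner w (x i)) ` {..<N})"
    have "\<mu> \<in> (\<lambda>i. inner w (x i)) ` {..<N}" unfolding \<mu>_def using False by (intro Min_in) auto
    then have "0 < \<mu>" using w by auto
    moreover have "\<mu> \<le> inner w (x i)" if "i < N" for i unfolding \<mu>_def using that by (intro Min_le) auto
    ultimately have "(1 / \<mu>) *\<^sub>R w \<in> S" by (simp add: S_def)
    then show ?thesis by blast
  qed
  define p where "p = closest_point S 0"
  have p_in: "p \<in> S" and p_min: "\<forall>y\<in>S. dist 0 p \<le> dist 0 y"
    unfolding p_def using closest_point_exists[OF \<open>closed S\<close> \<open>S \<noteq> {}\<close>] by blast+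
  have norm_sq_le_iff: "(norm w)\<^sup>2 \<le> (norm v)\<^sup>2 \<longleftrightarrow> dist 0 w \<le> dist 0 v" for w v :: 'a
    using abs_le_square_iff[of "norm w" "norm v"] by simp
  have "max_margin N x = p"
    unfolding max_margin_def
  proof (rule the_equality)
    show "(\<forall>i<N. inner p (x i) \<ge> 1) \<and> (\<forall>v. (\<forall>i<N. inner v (x i) \<ge> 1) \<longrightarrow> (norm p)\<^sup>2 \<le> (norm v)\<^sup>2)"
      using p_in p_min by (auto simp: S_def norm_sq_le_iff)
  next
    fix w assume "(\<forall>i<N. inner w (x i) \<ge> 1) \<and> (\<forall>v. (\<forall>i<N. inner v (x i) \<ge> 1) \<longrightarrow> (norm w)\<^sup>2 \<le> (norm v)\<^sup>2)"
    then have "w \<in> S" "\<forall>v\<in>S. dist 0 w \<le> dist 0 v" by (auto simp: S_def norm_sq_le_iff)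
    then show "w = p" unfolding p_def using closest_point_unique \<open>convex S\<close> \<open>closed S\<close> by blast
  qed
  then show "i < N \<Longrightarrow> 1 \<le> inner (max_margin N x) (x i)" using p_in by (simp add: S_def)
qed

locale separable_smooth_loss =
  fixes x :: "nat \<Rightarrow> 'a::euclidean_space" and N b :: nat and l dl :: "real \<Rightarrow> real"
    and H \<sigma> :: real and wh :: 'a
  assumes N_pos: "1 \<le> N" and b_pos: "1 \<le> b" and b_le_N: "b \<le> N"
    and l_deriv: "\<And>u. (l has_real_derivative dl u) (at u)"
    and dl_neg: "\<And>u. dl u < 0"
    and l_tendsto_0: "(l \<longlongrightarrow> 0) at_top"
    and dl_lipschitz: "\<And>u v. \<bar>dl u - dl v\<bar> \<le> H * \<bar>u - v\<bar>"
    and margin_ge_1: "\<And>i. i < N \<Longrightarrow> 1 \<le> inner wh (x i)"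
    and sigma_bound: "\<And>a. norm (\<Sum>i<N. a i *\<^sub>R x i) \<le> \<sigma> * sqrt (\<Sum>i<N. (a i)^2)"
begin

definition L :: "'a \<Rightarrow> real" where "L w = (1 / real N) * (\<Sum>i<N. l (inner w (x i)))"

abbreviation grad :: "'a \<Rightarrow> 'a" where "grad w \<equiv> full_grad dl N x w"

definition K :: real where "K = H * \<sigma>^2 / real N"

lemma H_nonneg: "0 \<le> H"
  using dl_lipschitz[of 1 0] by auto

lemma K_nonneg: "0 \<le> K"
  using H_nonneg by (simp add: K_def)

lemma l_nonneg: "0 \<le> l u"
proof (rule ccontr)
  assume "\<not> 0 \<le> l u"
  then obtain Y where Y: "\<And>y. y \<ge> Y \<Longrightarrow> l u < l y"
    using order_tendstoD(1)[OF l_tendsto_0, of "l u"] by (auto simp: eventually_at_top_linorder)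
  have "l (max Y (u + 1)) < l u"
    by (rule DERIV_neg_imp_decreasing) (auto intro: l_deriv dl_neg)
  then show False using Y[of "max Y (u + 1)"] by simp
qed

lemma L_nonneg: "0 \<le> L w"
  by (simp add: L_def sum_nonneg l_nonneg)

lemma power2_norm_sum_le_sigma:
  assumes "I \<subseteq> {..<N}"
  shows "(norm (\<Sum>i\<in>I. a i *\<^sub>R x i))^2 \<le> \<sigma>^2 * (\<Sum>i\<in>I. (a i)^2)"
proof -
  define a' where "a' i = (if i \<in> I then a i else 0)" for i
  have "(\<Sum>i<N. a' i *\<^sub>R x i) = (\<Sum>i\<in>I. a' i *\<^sub>R x i)"
    "(\<Sum>i<N. (a' i)^2) = (\<Sum>i\<in>I. (a' i)^2)"
    by (rule sum.mono_neutral_right; use assms in \<open>auto simp: a'_def\<close>)+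
  then have "(\<Sum>i<N. a' i *\<^sub>R x i) = (\<Sum>i\<in>I. a i *\<^sub>R x i)"
    "(\<Sum>i<N. (a' i)^2) = (\<Sum>i\<in>I. (a i)^2)"
    by (simp_all add: a'_def)
  then have "norm (\<Sum>i\<in>I. a i *\<^sub>R x i) \<le> \<sigma> * sqrt (\<Sum>i\<in>I. (a i)^2)"
    using sigma_bound[of a'] by simp
  then have "(norm (\<Sum>i\<in>I. a i *\<^sub>R x i))^2 \<le> (\<sigma> * sqrt (\<Sum>i\<in>I. (a i)^2))^2"
    by (intro power_mono) auto
  then show ?thesis
    by (simp add: power_mult_distrib sum_nonneg)
qed

lemma sigma_pos: "0 < \<sigma>"
proof -
  define e :: "nat \<Rightarrow> real" where "e i = (if i = 0 then 1 else 0)" for i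
  have "(\<Sum>i<N. e i *\<^sub>R x i) = (\<Sum>i<N. if i = 0 then x i else 0)"
    "(\<Sum>i<N. (e i)^2) = (\<Sum>i<N. if i = 0 then 1 else 0)"
    by (rule sum.cong; simp add: e_def)+
  then have "norm (x 0) \<le> \<sigma>"
    using sigma_bound[of e] N_pos by simp
  moreover have "0 < norm (x 0)" using margin_ge_1[of 0] N_pos by auto
  ultimately show ?thesis by linarith
qed

lemma sum_power2_inner_le: "(\<Sum>i<N. (inner d (x i))^2) \<le> \<sigma>^2 * (norm d)^2"
proof -
  define s where "s = (\<Sum>i<N. (inner d (x i))^2)"
  have s_nonneg: "0 \<le> s" by (simp add: s_def sum_nonneg)
  have "s = inner d (\<Sum>i<N. inner d (x i) *\<^sub>R x i)"
    by (simp add: s_def inner_sum_right power2_eq_square)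
  also have "\<dots> \<le> norm d * norm (\<Sum>i<N. inner d (x i) *\<^sub>R x i)"
    by (rule norm_cauchy_schwarz)
  also have "\<dots> \<le> norm d * (\<sigma> * sqrt s)"
    using sigma_bound[of "\<lambda>i. inner d (x i)"] by (simp add: s_def mult_left_mono)
  finally have s_le: "sqrt s * sqrt s \<le> (norm d * \<sigma>) * sqrt s"
    using s_nonneg by (simp add: mult.assoc)
  have "sqrt s \<le> norm d * \<sigma>"
  proof (cases "s = 0")
    case True
    then show ?thesis using sigma_pos by simp
  next
    case False
    then show ?thesis using mult_right_le_imp_le[OF s_le] s_nonneg by simp
  qed
  then have "(sqrt s)^2 \<le> (norm d * \<sigma>)^2" using s_nonneg by (intro power_mono) auto
  then show ?thesis using s_nonneg by (simp add: s_def power_mult_distrib mult.commute)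
qed

lemma L_smooth: "L v' \<le> L v + inner (grad v) (v' - v) + K / 2 * (norm (v' - v))^2"
proof -
  define d where "d = v' - v"
  have "(\<Sum>i<N. l (inner v' (x i)))
      \<le> (\<Sum>i<N. l (inner v (x i)) + dl (inner v (x i)) * inner d (x i) + H / 2 * (inner d (x i))^2)"
    using deriv_lipschitz_quadratic_upper_bound[OF l_deriv dl_lipschitz]
    by (intro sum_mono) (simp add: d_def inner_diff_left)
  also have "\<dots> = (\<Sum>i<N. l (inner v (x i))) + (\<Sum>i<N. dl (inner v (x i)) * inner d (x i))
                  + H / 2 * (\<Sum>i<N. (inner d (x i))^2)"
    by (simp add: sum.distrib sum_distrib_left)
  also have "\<dots> \<le> (\<Sum>i<N. l (inner v (x i))) + (\<Sum>i<N. dl (inner v (x i)) * inner d (x i))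
                  + H / 2 * (\<sigma>^2 * (norm d)^2)"
    using sum_power2_inner_le[of d] H_nonneg by (intro add_left_mono mult_left_mono) auto
  finally have sums: "(\<Sum>i<N. l (inner v' (x i))) \<le> \<dots>" .
  have grad_inner: "inner (grad v) d = (1 / real N) * (\<Sum>i<N. dl (inner v (x i)) * inner d (x i))"
    unfolding full_grad_def inner_scaleR_left inner_sum_left by (simp add: inner_commute)
  have N_gt_0: "0 < real N" using N_pos by simp
  from sums have "L v' \<le> (1 / real N) * ((\<Sum>i<N. l (inner v (x i)))
      + (\<Sum>i<N. dl (inner v (x i)) * inner d (x i)) + H / 2 * (\<sigma>^2 * (norm d)^2))"
    unfolding L_def using N_gt_0 by (intro mult_left_mono) auto
  also have "\<dots> = L v + inner (grad v) d + K / 2 * (norm d)^2"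
    using N_gt_0 by (simp add: L_def grad_inner K_def field_simps)
  finally show ?thesis by (simp add: d_def)
qed

lemma grad_lipschitz: "norm (grad v - grad w) \<le> K * norm (v - w)"
proof -
  define D where "D i = dl (inner v (x i)) - dl (inner w (x i))" for i
  have grad_diff: "grad v - grad w = (1 / real N) *\<^sub>R (\<Sum>i<N. D i *\<^sub>R x i)"
    by (simp add: D_def full_grad_def scaleR_diff_right sum_subtractf scaleR_left_diff_distrib)
  have D_sq: "(D i)^2 \<le> H^2 * (inner (v - w) (x i))^2" for i
  proof -
    have "\<bar>D i\<bar> \<le> H * \<bar>inner (v - w) (x i)\<bar>"
      using dl_lipschitz[of "inner v (x i)" "inner w (x i)"] by (simp add: D_def inner_diff_left)
    then have "\<bar>D i\<bar>^2 \<le> (H * \<bar>inner (v - w) (x i)\<bar>)^2" by (intro power_mono) auto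
    then show ?thesis by (simp add: power_mult_distrib)
  qed
  have "(norm (\<Sum>i<N. D i *\<^sub>R x i))^2 \<le> \<sigma>^2 * (\<Sum>i<N. (D i)^2)"
    by (rule power2_norm_sum_le_sigma) simp
  also have "\<dots> \<le> \<sigma>^2 * (H^2 * (\<Sum>i<N. (inner (v - w) (x i))^2))"
    using D_sq by (intro mult_left_mono) (auto simp: sum_distrib_left intro: sum_mono)
  also have "\<dots> \<le> \<sigma>^2 * (H^2 * (\<sigma>^2 * (norm (v - w))^2))"
    using sum_power2_inner_le[of "v - w"] by (intro mult_left_mono) auto
  also have "\<dots> = (H * \<sigma>^2 * norm (v - w))^2" by (simp add: power2_eq_square)
  finally have "norm (\<Sum>i<N. D i *\<^sub>R x i) \<le> H * \<sigma>^2 * norm (v - w)"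
    by (rule power2_le_imp_le) (use H_nonneg in auto)
  then show ?thesis
    by (simp add: grad_diff K_def divide_right_mono)
qed

text \<open>Pairing the gradient with the max-margin vector bounds every loss derivative by the gradient.\<close>

lemma sum_neg_dl_le_norm_grad: "(\<Sum>i<N. - dl (inner w (x i))) \<le> real N * norm wh * norm (grad w)"
proof -
  have "(\<Sum>i<N. - dl (inner w (x i))) \<le> (\<Sum>i<N. - dl (inner w (x i)) * inner (x i) wh)"
  proof (rule sum_mono)
    fix i assume "i \<in> {..<N}"
    then show "- dl (inner w (x i)) \<le> - dl (inner w (x i)) * inner (x i) wh"
      using margin_ge_1[of i] dl_neg[of "inner w (x i)"] by (simp add: inner_commute)
  qed
  also have "\<dots> = - real N * inner (grad w) wh"
    using N_pos by (simp add: full_grad_def inner_sum_left sum_negf)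
  also have "\<dots> \<le> real N * (norm (grad w) * norm wh)"
    using Cauchy_Schwarz_ineq2[of "grad w" wh] mult_left_mono[of "- inner (grad w) wh" _ "real N"]
    by simp
  finally show ?thesis by (simp add: mult_ac)
qed

lemma tendsto_at_top_if_summable_grad:
  fixes q :: "nat \<Rightarrow> 'a"
  assumes limsup: "Limsup at_bot (\<lambda>u. ereal (dl u)) < 0"
    and summable: "summable (\<lambda>k. (norm (grad (q k)))^2)"
    and i: "i < N"
  shows "filterlim (\<lambda>k. inner (q k) (x i)) at_top sequentially"
proof (rule filterlim_at_top_if_comp_tendsto_0[OF _ dl_neg limsup])
  show "continuous_on UNIV dl"
    by (rule lipschitz_on_continuous_on[of H])
      (use dl_lipschitz H_nonneg in \<open>auto intro!: lipschitz_onI simp: dist_real_def\<close>)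
  have "(\<lambda>k. sqrt ((norm (grad (q k)))^2)) \<longlonglongrightarrow> sqrt 0"
    by (intro tendsto_real_sqrt summable_LIMSEQ_zero[OF summable])
  then have bound_tendsto: "(\<lambda>k. real N * norm wh * norm (grad (q k))) \<longlonglongrightarrow> 0"
    using tendsto_mult_left[of _ 0 _ "real N * norm wh"] by simp
  have neg_dl_le: "- dl (inner (q k) (x i)) \<le> real N * norm wh * norm (grad (q k))" for k
  proof -
    have "- dl (inner (q k) (x i)) \<le> (\<Sum>j<N. - dl (inner (q k) (x j)))"
      by (rule member_le_sum) (use i dl_neg in \<open>auto simp: less_imp_le\<close>)
    also have "\<dots> \<le> real N * norm wh * norm (grad (q k))" by (rule sum_neg_dl_le_norm_grad)
    finally show ?thesis .
  qed
  have "(\<lambda>k. - dl (inner (q k) (x i))) \<longlonglongrightarrow> 0"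
    by (rule tendsto_sandwich[OF _ _ tendsto_const bound_tendsto])
      (use dl_neg neg_dl_le in \<open>auto simp: less_imp_le\<close>)
  then show "(\<lambda>k. dl (inner (q k) (x i))) \<longlonglongrightarrow> 0"
    by (simp add: tendsto_minus_cancel_left[symmetric])
qed
end

section \<open>Uniform minibatches\<close>

lemma finite_batches: "finite (batches N b)"
  unfolding batches_def by (rule finite_subset[of _ "Pow {..<N}"]) auto

lemma card_batches: "card (batches N b) = N choose b"
  unfolding batches_def using n_subsets[of "{..<N}" b] by simp

lemma batches_nonempty: "b \<le> N \<Longrightarrow> batches N b \<noteq> {}"
  using card_batches[of N b] by force

lemma card_batches_containing:
  assumes "i < N" "1 \<le> b"
  shows "card {B \<in> batches N b. i \<in> B} = (N - 1) choose (b - 1)"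
proof -
  define C where "C = {D. D \<subseteq> {..<N} - {i} \<and> card D = b - 1}"
  have "{B \<in> batches N b. i \<in> B} = insert i ` C"
  proof (intro equalityI subsetI)
    fix B assume "B \<in> {B \<in> batches N b. i \<in> B}"
    then have B: "B \<subseteq> {..<N}" "card B = b" "i \<in> B" by (auto simp: batches_def)
    then have "B - {i} \<in> C" using finite_subset[of B] by (auto simp: C_def)
    moreover have "B = insert i (B - {i})" using B by auto
    ultimately show "B \<in> insert i ` C" by blast
  next
    fix B assume "B \<in> insert i ` C"
    then obtain D where D: "D \<subseteq> {..<N} - {i}" "card D = b - 1" "B = insert i D"
      by (auto simp: C_def)
    have "finite D" "i \<notin> D" using D(1) finite_subset by auto
    then have "card B = Suc (b - 1)" using D by simp
    then show "B \<in> {B \<in> batches N b. i \<in> B}" using D assms by (auto simp: batches_def)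
  qed
  moreover have "inj_on (insert i) C"
    by (rule inj_onI) (auto simp: C_def dest: insert_ident)
  moreover have "card C = (N - 1) choose (b - 1)"
    unfolding C_def using n_subsets[of "{..<N} - {i}" "b - 1"] assms by simp
  ultimately show ?thesis by (simp add: card_image)
qed

lemma real_card_batches_containing:
  assumes "i < N" "1 \<le> b" "b \<le> N"
  shows "real (card {B \<in> batches N b. i \<in> B}) = real b * real (card (batches N b)) / real N"
proof -
  obtain n k where nk: "N = Suc n" "b = Suc k"
    using assms by (metis Suc_le_D not0_implies_Suc not_less0 not_one_le_zero)
  have "real (Suc n) * real (n choose k) = real (Suc n choose Suc k) * real (Suc k)"
    by (metis Suc_times_binomial_eq of_nat_mult)
  then show ?thesis using assms
    by (simp add: card_batches_containing card_batches nk field_simps del: of_nat_Suc)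
qed

lemma sum_batches_sum:
  fixes f :: "nat \<Rightarrow> 'v::real_vector"
  assumes "1 \<le> b" "b \<le> N"
  shows "(\<Sum>B\<in>batches N b. \<Sum>i\<in>B. f i)
       = (real b * real (card (batches N b)) / real N) *\<^sub>R (\<Sum>i<N. f i)"
proof -
  have "(\<Sum>B\<in>batches N b. \<Sum>i\<in>B. f i) = (\<Sum>B\<in>batches N b. \<Sum>i<N. if i \<in> B then f i else 0)"
  proof (rule sum.cong[OF refl])
    fix B assume "B \<in> batches N b"
    then have "B \<subseteq> {..<N}" by (simp add: batches_def)
    then show "(\<Sum>i\<in>B. f i) = (\<Sum>i<N. if i \<in> B then f i else 0)"
      by (simp add: sum.If_cases Int_absorb1)
  qed
  also have "\<dots> = (\<Sum>i<N. \<Sum>B\<in>batches N b. if i \<in> B then f i else 0)"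
    by (rule sum.swap)
  also have "\<dots> = (\<Sum>i<N. real (card {B \<in> batches N b. i \<in> B}) *\<^sub>R f i)"
    by (simp add: sum.If_cases finite_batches sum_constant_scaleR Collect_conj_eq Int_commute)
  also have "\<dots> = (\<Sum>i<N. (real b * real (card (batches N b)) / real N) *\<^sub>R f i)"
    using real_card_batches_containing assms by simp
  also have "\<dots> = (real b * real (card (batches N b)) / real N) *\<^sub>R (\<Sum>i<N. f i)"
    by (simp add: scaleR_sum_right)
  finally show ?thesis .
qed

context separable_smooth_loss
begin

definition c1 :: real where "c1 = \<sigma>^2 * real N * (norm wh)^2 / real b"

lemma c1_pos: "0 < c1"
proof -
  have "wh \<noteq> 0" using margin_ge_1[of 0] N_pos by auto
  then show ?thesis using sigma_pos N_pos b_pos by (simp add: c1_def)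
qed

lemma sum_batch_grad:
  "(\<Sum>B\<in>batches N b. batch_grad dl b x B w) = real (card (batches N b)) *\<^sub>R grad w"
  using b_pos
  by (simp add: batch_grad_def full_grad_def scaleR_sum_right[symmetric] sum_batches_sum b_le_N)

lemma sum_power2_norm_batch_grad_le:
  "(\<Sum>B\<in>batches N b. (norm (batch_grad dl b x B w))^2)
     \<le> real (card (batches N b)) * (c1 * (norm (grad w))^2)"
proof -
  define g where "g i = - dl (inner w (x i))" for i
  have g_nonneg: "0 \<le> g i" for i using dl_neg by (simp add: g_def less_imp_le)
  have b_gt_0: "0 < real b" using b_pos by simp
  have "(\<Sum>B\<in>batches N b. (norm (batch_grad dl b x B w))^2)
      \<le> (\<Sum>B\<in>batches N b. (1 / real b)^2 * (\<sigma>^2 * (\<Sum>i\<in>B. (g i)^2)))"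
  proof (rule sum_mono)
    fix B assume "B \<in> batches N b"
    then have "(norm (\<Sum>i\<in>B. g i *\<^sub>R x i))^2 \<le> \<sigma>^2 * (\<Sum>i\<in>B. (g i)^2)"
      by (intro power2_norm_sum_le_sigma) (auto simp: batches_def)
    then show "(norm (batch_grad dl b x B w))^2 \<le> (1 / real b)^2 * (\<sigma>^2 * (\<Sum>i\<in>B. (g i)^2))"
      using b_gt_0 by (simp add: batch_grad_def g_def sum_negf power_divide divide_right_mono)
  qed
  also have "\<dots> = (1 / real b)^2 * \<sigma>^2 * (real b * real (card (batches N b)) / real N) * (\<Sum>i<N. (g i)^2)"
    using sum_batches_sum[OF b_pos b_le_N, of "\<lambda>i. (g i)^2"]
    by (simp add: sum_distrib_left[symmetric] mult_ac)
  also have "\<dots> \<le> (1 / real b)^2 * \<sigma>^2 * (real b * real (card (batches N b)) / real N)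
                  * (real N * norm wh * norm (grad w))^2"
  proof -
    have "(\<Sum>i<N. (g i)^2) \<le> (\<Sum>i<N. g i)^2"
      using g_nonneg by (intro sum_power2_le_power2_sum) auto
    also have "\<dots> \<le> (real N * norm wh * norm (grad w))^2"
      using sum_neg_dl_le_norm_grad[of w] g_nonneg
      by (intro power_mono) (auto simp: g_def intro: sum_nonneg)
    finally show ?thesis by (intro mult_left_mono) auto
  qed
  also have "\<dots> = real (card (batches N b)) * (c1 * (norm (grad w))^2)"
    using b_gt_0 N_pos by (simp add: c1_def power2_eq_square field_simps)
  finally show ?thesis .
qed

end

section \<open>Expectations over the first T batches\<close>

text \<open>
  Everything SGDM computes up to time T is a function of the batches at times 1, ..., T, so its
  expectation is a uniform average over the finite set of such batch paths.
\<close>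

definition paths :: "'b set \<Rightarrow> nat \<Rightarrow> (nat \<Rightarrow> 'b) set" where
  "paths S T = PiE {1..T} (\<lambda>_. S)"

definition path_mean :: "'b set \<Rightarrow> nat \<Rightarrow> ((nat \<Rightarrow> 'b) \<Rightarrow> real) \<Rightarrow> real" where
  "path_mean S T F = (\<Sum>\<rho>\<in>paths S T. F \<rho>) / real (card (paths S T))"

definition depends_upto :: "nat \<Rightarrow> ((nat \<Rightarrow> 'b) \<Rightarrow> 'c) \<Rightarrow> bool" where
  "depends_upto k F \<longleftrightarrow> (\<forall>\<omega> \<omega>'. (\<forall>s\<in>{1..k}. \<omega> s = \<omega>' s) \<longrightarrow> F \<omega> = F \<omega>')"

lemma finite_paths: "finite S \<Longrightarrow> finite (paths S T)"
  by (simp add: paths_def finite_PiE)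

lemma card_paths: "finite S \<Longrightarrow> card (paths S T) = card S ^ T"
  by (simp add: paths_def card_PiE)

lemma path_mean_add: "path_mean S T (\<lambda>\<omega>. F \<omega> + G \<omega>) = path_mean S T F + path_mean S T G"
  by (simp add: path_mean_def sum.distrib add_divide_distrib)

lemma path_mean_diff: "path_mean S T (\<lambda>\<omega>. F \<omega> - G \<omega>) = path_mean S T F - path_mean S T G"
  by (simp add: path_mean_def sum_subtractf diff_divide_distrib)

lemma path_mean_cmult: "path_mean S T (\<lambda>\<omega>. c * F \<omega>) = c * path_mean S T F"
  by (simp add: path_mean_def sum_distrib_left[symmetric])

lemma path_mean_mono:
  "(\<And>\<omega>. \<omega> \<in> paths S T \<Longrightarrow> F \<omega> \<le> G \<omega>) \<Longrightarrow> path_mean S T F \<le> path_mean S T G"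
  unfolding path_mean_def by (intro divide_right_mono sum_mono) auto

lemma path_mean_nonneg: "(\<And>\<omega>. \<omega> \<in> paths S T \<Longrightarrow> 0 \<le> F \<omega>) \<Longrightarrow> 0 \<le> path_mean S T F"
  unfolding path_mean_def by (intro divide_nonneg_nonneg sum_nonneg) auto

lemma path_mean_const: "finite S \<Longrightarrow> S \<noteq> {} \<Longrightarrow> path_mean S T (\<lambda>_. c) = c"
  by (simp add: path_mean_def card_paths card_eq_0_iff)

lemma depends_upto_mono: "depends_upto k F \<Longrightarrow> k \<le> k' \<Longrightarrow> depends_upto k' F"
  unfolding depends_upto_def by auto

lemma depends_upto_comp: "depends_upto k F \<Longrightarrow> depends_upto k (\<lambda>\<omega>. g (F \<omega>))"
  unfolding depends_upto_def by metis

lemma depends_upto_fun_upd: "depends_upto k F \<Longrightarrow> k < t \<Longrightarrow> F (w(t := B)) = F w"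
  unfolding depends_upto_def by (metis atLeastAtMost_iff fun_upd_other not_le)

lemma sum_PiE_insert:
  assumes "t \<notin> J"
  shows "(\<Sum>\<rho>\<in>PiE (insert t J) A. F \<rho>) = (\<Sum>B\<in>A t. \<Sum>g\<in>PiE J A. F (g(t := B)))"
proof -
  have "(\<Sum>\<rho>\<in>PiE (insert t J) A. F \<rho>) = (\<Sum>\<rho>\<in>(\<lambda>(y, g). g(t := y)) ` (A t \<times> PiE J A). F \<rho>)"
    by (simp add: PiE_insert_eq)
  also have "\<dots> = (\<Sum>p\<in>A t \<times> PiE J A. F ((\<lambda>(y, g). g(t := y)) p))"
    by (rule sum.reindex[OF inj_combinator[OF assms], unfolded comp_def])
  also have "\<dots> = (\<Sum>B\<in>A t. \<Sum>g\<in>PiE J A. F (g(t := B)))"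
    by (simp add: sum.cartesian_product split_def)
  finally show ?thesis .
qed

text \<open>The batch at time t is independent of everything determined by the earlier batches.\<close>

lemma path_mean_fresh_batch:
  assumes S: "finite S" "S \<noteq> {}" and t: "k < t" "t \<le> T" and Z: "depends_upto k Z"
  shows "path_mean S T (\<lambda>\<omega>. h (Z \<omega>) (\<omega> t))
       = path_mean S T (\<lambda>\<omega>. (\<Sum>B\<in>S. h (Z \<omega>) B) / real (card S))"
proof -
  define J where "J = {1..T} - {t}"
  have paths_insert: "paths S T = PiE (insert t J) (\<lambda>_. S)" and "t \<notin> J"
    using t by (auto simp: J_def paths_def intro!: arg_cong[of _ _ "\<lambda>I. PiE I _"])
  have Z_upd: "Z (g(t := B)) = Z g" for g B by (rule depends_upto_fun_upd[OF Z t(1)])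
  have card_S: "0 < real (card S)" using S by (simp add: card_gt_0_iff)
  have "(\<Sum>\<rho>\<in>paths S T. h (Z \<rho>) (\<rho> t)) = (\<Sum>g\<in>PiE J (\<lambda>_. S). \<Sum>B\<in>S. h (Z g) B)"
    unfolding paths_insert sum_PiE_insert[OF \<open>t \<notin> J\<close>] by (simp add: Z_upd sum.swap[of _ S])
  also have "\<dots> = (\<Sum>B\<in>S. \<Sum>g\<in>PiE J (\<lambda>_. S). (\<Sum>B'\<in>S. h (Z g) B') / real (card S))"
    using card_S by (simp add: sum_divide_distrib[symmetric])
  also have "\<dots> = (\<Sum>\<rho>\<in>paths S T. (\<Sum>B\<in>S. h (Z \<rho>) B) / real (card S))"
    unfolding paths_insert sum_PiE_insert[OF \<open>t \<notin> J\<close>] by (simp add: Z_upd)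
  finally show ?thesis by (simp add: path_mean_def)
qed

lemma depends_upto_sgdm_state: "depends_upto t (\<lambda>\<omega>. sgdm_state dl b x \<beta> \<eta> w0 \<omega> t)"
proof (induction t)
  case (Suc t)
  show ?case unfolding depends_upto_def
  proof (intro allI impI)
    fix \<omega> \<omega>' :: "nat \<Rightarrow> nat set"
    assume "\<forall>s\<in>{1..Suc t}. \<omega> s = \<omega>' s"
    moreover from this have "sgdm_state dl b x \<beta> \<eta> w0 \<omega> t = sgdm_state dl b x \<beta> \<eta> w0 \<omega>' t"
      using Suc.IH unfolding depends_upto_def by auto
    ultimately show "sgdm_state dl b x \<beta> \<eta> w0 \<omega> (Suc t) = sgdm_state dl b x \<beta> \<eta> w0 \<omega>' (Suc t)"
      by (simp add: Let_def)
  qed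
qed (simp add: depends_upto_def)

lemma emeasure_PiM_uniform_cylinder:
  assumes S: "finite S" "S \<noteq> {}" and \<rho>: "\<rho> \<in> paths S T"
  defines "M \<equiv> PiM (UNIV::nat set) (\<lambda>_. measure_pmf (pmf_of_set S))"
  shows "emeasure M {\<omega>\<in>space M. \<forall>t\<in>{1..T}. \<omega> t \<in> {\<rho> t}} = ennreal ((1 / real (card S))^T)"
proof -
  interpret product_prob_space "\<lambda>_::nat. measure_pmf (pmf_of_set S)" UNIV
    by (rule product_prob_spaceI) (rule prob_space_measure_pmf)
  have "emeasure M {\<omega>\<in>space M. \<forall>t\<in>{1..T}. \<omega> t \<in> {\<rho> t}}
      = (\<Prod>t\<in>{1..T}. emeasure (measure_pmf (pmf_of_set S)) {\<rho> t})"
    unfolding M_def by (rule emeasure_PiM_Collect) auto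
  also have "\<dots> = (\<Prod>t\<in>{1..T}. ennreal (1 / real (card S)))"
  proof (rule prod.cong[OF refl])
    fix t assume "t \<in> {1..T}"
    then have "\<rho> t \<in> S" using \<rho> by (auto simp: paths_def)
    then show "emeasure (measure_pmf (pmf_of_set S)) {\<rho> t} = ennreal (1 / real (card S))"
      using S by (simp add: emeasure_pmf_single)
  qed
  finally show ?thesis by (simp add: ennreal_power)
qed

text \<open>
  A function of the first T batches need not be measurable (the batch type is uncountable), but
  it agrees almost surely with a simple function whose integral is its path mean.
\<close>

lemma nn_integral_PiM_uniform_path_mean:
  fixes S :: "'b set" and F :: "(nat \<Rightarrow> 'b) \<Rightarrow> real"
  assumes S: "finite S" "S \<noteq> {}" and F: "depends_upto T F" and nonneg: "\<And>\<omega>. 0 \<le> F \<omega>"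
  defines "M \<equiv> PiM (UNIV::nat set) (\<lambda>_. measure_pmf (pmf_of_set S))"
  shows "\<exists>s\<in>borel_measurable M. (AE \<omega> in M. ennreal (F \<omega>) = s \<omega>)
           \<and> integral\<^sup>N M s = ennreal (path_mean S T F)"
proof -
  define C where "C \<rho> = {\<omega>\<in>space M. \<forall>t\<in>{1..T}. \<omega> t \<in> {\<rho> t}}" for \<rho>
  define s where "s \<omega> = (\<Sum>\<rho>\<in>paths S T. ennreal (F \<rho>) * indicator (C \<rho>) \<omega>)" for \<omega>
  have C_sets: "C \<rho> \<in> sets M" for \<rho>
    unfolding C_def M_def by (intro sets.sets_Collect_finite_All measurable_sets) auto
  have "s \<in> borel_measurable M"
    unfolding s_def using C_sets by measurable
  moreover have "AE \<omega> in M. \<forall>t. \<omega> t \<in> S"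
    unfolding AE_all_countable M_def
    by (intro allI AE_PiM_component) (use S in \<open>auto simp: AE_measure_pmf_iff prob_space_measure_pmf\<close>)
  then have "AE \<omega> in M. ennreal (F \<omega>) = s \<omega>"
  proof eventually_elim
    case (elim \<omega>)
    define \<rho>\<^sub>0 where "\<rho>\<^sub>0 = restrict \<omega> {1..T}"
    have "\<rho>\<^sub>0 \<in> paths S T" using elim by (auto simp: paths_def \<rho>\<^sub>0_def)
    have "\<omega> \<in> C \<rho> \<longleftrightarrow> \<rho> = \<rho>\<^sub>0" if "\<rho> \<in> paths S T" for \<rho>
      using that by (auto simp: C_def M_def space_PiM \<rho>\<^sub>0_def paths_def PiE_def extensional_def)
    then have "s \<omega> = (\<Sum>\<rho>\<in>paths S T. if \<rho> = \<rho>\<^sub>0 then ennreal (F \<rho>) else 0)"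
      unfolding s_def by (intro sum.cong refl) (simp add: indicator_def)
    also have "\<dots> = ennreal (F \<rho>\<^sub>0)"
      using \<open>\<rho>\<^sub>0 \<in> paths S T\<close> S by (simp add: finite_paths)
    also have "F \<rho>\<^sub>0 = F \<omega>"
      using F by (simp add: depends_upto_def \<rho>\<^sub>0_def)
    finally show ?case by simp
  qed
  moreover have "integral\<^sup>N M s = ennreal (path_mean S T F)"
  proof -
    have "integral\<^sup>N M s = (\<Sum>\<rho>\<in>paths S T. ennreal (F \<rho>) * emeasure M (C \<rho>))"
      unfolding s_def using C_sets by (simp add: nn_integral_sum nn_integral_cmult_indicator)
    also have "\<dots> = (\<Sum>\<rho>\<in>paths S T. ennreal (F \<rho> * (1 / real (card S))^T))"
      using emeasure_PiM_uniform_cylinder[OF S] nonneg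
      by (intro sum.cong refl) (simp add: C_def M_def ennreal_mult)
    also have "\<dots> = ennreal (path_mean S T F)"
      using S nonneg
      by (simp add: sum_nonneg path_mean_def card_paths sum_distrib_right[symmetric]
          power_one_over divide_inverse power_inverse)
    finally show ?thesis .
  qed
  ultimately show ?thesis by blast
qed

lemma AE_summable_if_suminf_nn_integral_finite:
  fixes f :: "nat \<Rightarrow> 'b \<Rightarrow> real"
  assumes nonneg: "\<And>k \<omega>. 0 \<le> f k \<omega>"
    and AE_measurable: "\<And>k. \<exists>s\<in>borel_measurable M. AE \<omega> in M. ennreal (f k \<omega>) = s \<omega>"
    and finite: "(\<Sum>k. \<integral>\<^sup>+\<omega>. ennreal (f k \<omega>) \<partial>M) < \<infinity>"
  shows "AE \<omega> in M. summable (\<lambda>k. f k \<omega>)"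
proof -
  obtain s where s_meas: "\<And>k. s k \<in> borel_measurable M"
    and s_AE: "\<And>k. AE \<omega> in M. ennreal (f k \<omega>) = s k \<omega>"
    using AE_measurable by metis
  have "(\<integral>\<^sup>+\<omega>. (\<Sum>k. s k \<omega>) \<partial>M) = (\<Sum>k. \<integral>\<^sup>+\<omega>. ennreal (f k \<omega>) \<partial>M)"
    using nn_integral_cong_AE[OF s_AE] by (simp add: nn_integral_suminf[OF s_meas])
  with finite have "AE \<omega> in M. (\<Sum>k. s k \<omega>) \<noteq> \<infinity>"
    using s_meas by (intro nn_integral_PInf_AE) auto
  moreover have "AE \<omega> in M. \<forall>k. ennreal (f k \<omega>) = s k \<omega>"
    using s_AE by (simp add: AE_all_countable)
  ultimately show ?thesis
  proof eventually_elim
    case (elim \<omega>)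
    then have "(\<Sum>k. ennreal (f k \<omega>)) \<noteq> top" by simp
    then show ?case by (rule summable_suminf_not_top[OF nonneg])
  qed
qed

section \<open>SGDM\<close>

locale sgdm = separable_smooth_loss +
  fixes \<beta> \<eta> :: real and w0 :: 'a
  assumes beta_nonneg: "0 \<le> \<beta>" and beta_less_1: "\<beta> < 1" and eta_pos: "0 < \<eta>"
    and step_size: "\<eta> * (K * \<beta> * sqrt c1 / (1 - \<beta>) + K * c1 / 2) < 1"
begin

abbreviation mean :: "nat \<Rightarrow> ((nat \<Rightarrow> nat set) \<Rightarrow> real) \<Rightarrow> real" where
  "mean T \<equiv> path_mean (batches N b) T"

abbreviation state :: "nat \<Rightarrow> (nat \<Rightarrow> nat set) \<Rightarrow> 'a \<times> 'a" where
  "state k \<omega> \<equiv> sgdm_state dl b x \<beta> \<eta> w0 \<omega> k"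

definition W :: "nat \<Rightarrow> (nat \<Rightarrow> nat set) \<Rightarrow> 'a" where "W k \<omega> = sgdm_w dl b x \<beta> \<eta> w0 \<omega> k"

definition Mom :: "nat \<Rightarrow> (nat \<Rightarrow> nat set) \<Rightarrow> 'a" where "Mom k \<omega> = snd (state k \<omega>)"

definition SG :: "nat \<Rightarrow> (nat \<Rightarrow> nat set) \<Rightarrow> 'a" where
  "SG k \<omega> = batch_grad dl b x (\<omega> (Suc k)) (W (Suc k) \<omega>)"

definition shift :: real where "shift = \<eta> * \<beta> / (1 - \<beta>)"

definition V :: "nat \<Rightarrow> (nat \<Rightarrow> nat set) \<Rightarrow> 'a" where "V k \<omega> = W (Suc k) \<omega> - shift *\<^sub>R Mom k \<omega>"

definition alpha :: real where "alpha = \<eta> * K * shift / (2 * sqrt c1 * (1 - \<beta>))"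

definition delta :: real where "delta = 1 - \<eta> * (K * \<beta> * sqrt c1 / (1 - \<beta>) + K * c1 / 2)"

lemma delta_pos: "0 < delta"
  using step_size by (simp add: delta_def)

lemma shift_nonneg: "0 \<le> shift"
  using beta_nonneg beta_less_1 eta_pos by (simp add: shift_def)

lemma alpha_nonneg: "0 \<le> alpha"
  using shift_nonneg K_nonneg c1_pos beta_less_1 eta_pos by (simp add: alpha_def)

lemma W_Suc: "W (Suc k) \<omega> = W k \<omega> - \<eta> *\<^sub>R Mom k \<omega>"
  by (simp add: W_def Mom_def sgdm_w_def Let_def)

lemma Mom_0: "Mom 0 \<omega> = 0"
  by (simp add: Mom_def)

lemma Mom_Suc: "Mom (Suc k) \<omega> = \<beta> *\<^sub>R Mom k \<omega> + (1 - \<beta>) *\<^sub>R SG k \<omega>"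
  by (simp add: W_def Mom_def SG_def sgdm_w_def Let_def)

lemma V_0: "V 0 \<omega> = w0"
  by (simp add: V_def W_Suc Mom_0 W_def sgdm_w_def)

lemma V_Suc: "V (Suc k) \<omega> = V k \<omega> - \<eta> *\<^sub>R SG k \<omega>"
proof -
  have "1 - \<beta> \<noteq> 0" using beta_less_1 by simp
  then have coeffs: "(\<eta> + shift) * \<beta> = shift" "(\<eta> + shift) * (1 - \<beta>) = \<eta>"
    by (simp_all add: shift_def field_simps)
  have "V (Suc k) \<omega> = W (Suc k) \<omega> - (\<eta> + shift) *\<^sub>R (\<beta> *\<^sub>R Mom k \<omega> + (1 - \<beta>) *\<^sub>R SG k \<omega>)"
    by (simp add: V_def W_Suc[of "Suc k"] Mom_Suc scaleR_add_left)
  also have "\<dots> = W (Suc k) \<omega> - ((\<eta> + shift) * \<beta>) *\<^sub>R Mom k \<omega> - ((\<eta> + shift) * (1 - \<beta>)) *\<^sub>R SG k \<omega>"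
    by (simp only: scaleR_add_right scaleR_scaleR diff_diff_eq)
  finally show ?thesis by (simp only: coeffs V_def)
qed

lemma depends_upto_V_W: "depends_upto k (\<lambda>\<omega>. (V k \<omega>, W (Suc k) \<omega>))"
proof -
  define g where "g s = (fst s - \<eta> *\<^sub>R snd s - shift *\<^sub>R snd s, fst s - \<eta> *\<^sub>R snd s)" for s :: "'a \<times> 'a"
  have "(\<lambda>\<omega>. (V k \<omega>, W (Suc k) \<omega>)) = (\<lambda>\<omega>. g (state k \<omega>))"
    unfolding V_def W_Suc by (simp add: g_def W_def sgdm_w_def Mom_def)
  then show ?thesis
    using depends_upto_comp[OF depends_upto_sgdm_state[of k dl b x \<beta> \<eta> w0], of g] by simp
qed

lemma L_V_Suc_le:
  "L (V (Suc k) \<omega>) \<le> L (V k \<omega>) - \<eta> * inner (grad (V k \<omega>)) (SG k \<omega>) + K / 2 * \<eta>^2 * (norm (SG k \<omega>))^2"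
proof -
  have "V (Suc k) \<omega> - V k \<omega> = - (\<eta> *\<^sub>R SG k \<omega>)" by (simp add: V_Suc)
  moreover have "(norm (- (\<eta> *\<^sub>R SG k \<omega>)))^2 = \<eta>^2 * (norm (SG k \<omega>))^2"
    using eta_pos by (simp add: power_mult_distrib)
  ultimately show ?thesis
    using L_smooth[of "V (Suc k) \<omega>" "V k \<omega>"] by simp
qed

lemma power2_norm_Mom_Suc_le:
  "(norm (Mom (Suc k) \<omega>))^2 \<le> \<beta> * (norm (Mom k \<omega>))^2 + (1 - \<beta>) * (norm (SG k \<omega>))^2"
  unfolding Mom_Suc by (rule power2_norm_convex_combination_le) (use beta_nonneg beta_less_1 in auto)

text \<open>The momentum lag costs K shift \<parallel>Mom k\<parallel> \<parallel>\<nabla>L\<parallel>, which Young's inequality splits between both terms.\<close>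

lemma inner_grad_V_grad_W_ge:
  fixes k :: nat and \<omega> :: "nat \<Rightarrow> nat set"
  defines "g \<equiv> grad (W (Suc k) \<omega>)"
  shows "(norm g)^2 - K * shift * ((norm (Mom k \<omega>))^2 / (2 * sqrt c1) + sqrt c1 * (norm g)^2 / 2)
           \<le> inner (grad (V k \<omega>)) g"
proof -
  define m where "m = Mom k \<omega>"
  have "norm (grad (V k \<omega>) - g) \<le> K * (shift * norm m)"
    using grad_lipschitz[of "V k \<omega>" "W (Suc k) \<omega>"] shift_nonneg by (simp add: g_def m_def V_def)
  then have "norm (grad (V k \<omega>) - g) * norm g \<le> K * (shift * norm m) * norm g"
    by (rule mult_right_mono) simp
  also have "\<dots> = K * shift * (norm m * norm g)"
    by (simp add: mult_ac)
  also have "\<dots> \<le> K * shift * ((norm m)^2 / (2 * sqrt c1) + sqrt c1 * (norm g)^2 / 2)"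
    using mult_le_weighted_power2_sum[of "sqrt c1" "norm m" "norm g"] c1_pos K_nonneg shift_nonneg
    by (intro mult_left_mono) auto
  finally have lag: "norm (grad (V k \<omega>) - g) * norm g \<le> \<dots>" .
  have "inner (grad (V k \<omega>)) g = (norm g)^2 + inner (grad (V k \<omega>) - g) g"
    by (simp add: inner_diff_left power2_norm_eq_inner)
  moreover have "- (norm (grad (V k \<omega>) - g) * norm g) \<le> inner (grad (V k \<omega>) - g) g"
    using Cauchy_Schwarz_ineq2[of "grad (V k \<omega>) - g" g] by linarith
  ultimately show ?thesis using lag by (simp add: m_def)
qed

lemma mean_inner_SG:
  assumes "k < T"
  shows "mean T (\<lambda>\<omega>. inner (grad (V k \<omega>)) (SG k \<omega>))
       = mean T (\<lambda>\<omega>. inner (grad (V k \<omega>)) (grad (W (Suc k) \<omega>)))"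
proof -
  have avg: "(\<Sum>B\<in>batches N b. inner u (batch_grad dl b x B v)) / real (card (batches N b))
           = inner u (grad v)" for u v
    using batches_nonempty[OF b_le_N] finite_batches[of N b]
    by (simp add: inner_sum_right[symmetric] sum_batch_grad)
  have "mean T (\<lambda>\<omega>. inner (grad (V k \<omega>)) (SG k \<omega>))
      = mean T (\<lambda>\<omega>. (\<lambda>z B. inner (grad (fst z)) (batch_grad dl b x B (snd z)))
                        (V k \<omega>, W (Suc k) \<omega>) (\<omega> (Suc k)))"
    by (simp add: SG_def)
  also have "\<dots> = mean T (\<lambda>\<omega>. inner (grad (V k \<omega>)) (grad (W (Suc k) \<omega>)))"
    using assms by (subst path_mean_fresh_batch[OF finite_batches batches_nonempty[OF b_le_N] _ _
        depends_upto_V_W]) (simp_all add: avg)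
  finally show ?thesis .
qed

lemma mean_power2_norm_SG_le:
  assumes "k < T"
  shows "mean T (\<lambda>\<omega>. (norm (SG k \<omega>))^2) \<le> c1 * mean T (\<lambda>\<omega>. (norm (grad (W (Suc k) \<omega>)))^2)"
proof -
  have avg: "(\<Sum>B\<in>batches N b. (norm (batch_grad dl b x B v))^2) / real (card (batches N b))
           \<le> c1 * (norm (grad v))^2" for v
    using sum_power2_norm_batch_grad_le[of v] batches_nonempty[OF b_le_N] finite_batches[of N b]
    by (simp add: divide_simps card_gt_0_iff mult.commute)
  have "mean T (\<lambda>\<omega>. (norm (SG k \<omega>))^2)
      = mean T (\<lambda>\<omega>. (\<lambda>z B. (norm (batch_grad dl b x B (snd z)))^2) (V k \<omega>, W (Suc k) \<omega>) (\<omega> (Suc k)))"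
    by (simp add: SG_def)
  also have "\<dots> = mean T (\<lambda>\<omega>. (\<Sum>B\<in>batches N b. (norm (batch_grad dl b x B (W (Suc k) \<omega>)))^2)
                               / real (card (batches N b)))"
    using assms by (subst path_mean_fresh_batch[OF finite_batches batches_nonempty[OF b_le_N] _ _
        depends_upto_V_W]) simp_all
  also have "\<dots> \<le> mean T (\<lambda>\<omega>. c1 * (norm (grad (W (Suc k) \<omega>)))^2)"
    by (intro path_mean_mono avg)
  finally show ?thesis by (simp add: path_mean_cmult)
qed

lemma mean_L_V_Suc_le:
  assumes "k < T"
  shows "mean T (\<lambda>\<omega>. L (V (Suc k) \<omega>))
           \<le> mean T (\<lambda>\<omega>. L (V k \<omega>)) - \<eta> * mean T (\<lambda>\<omega>. inner (grad (V k \<omega>)) (grad (W (Suc k) \<omega>)))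
             + K / 2 * \<eta>^2 * mean T (\<lambda>\<omega>. (norm (SG k \<omega>))^2)"
proof -
  have "mean T (\<lambda>\<omega>. L (V (Suc k) \<omega>)) \<le> mean T (\<lambda>\<omega>. L (V k \<omega>)
      - \<eta> * inner (grad (V k \<omega>)) (SG k \<omega>) + K / 2 * \<eta>^2 * (norm (SG k \<omega>))^2)"
    by (rule path_mean_mono) (rule L_V_Suc_le)
  then show ?thesis
    by (simp only: path_mean_add path_mean_diff path_mean_cmult mean_inner_SG[OF assms])
qed

lemma mean_power2_norm_Mom_Suc_le:
  "mean T (\<lambda>\<omega>. (norm (Mom (Suc k) \<omega>))^2)
     \<le> \<beta> * mean T (\<lambda>\<omega>. (norm (Mom k \<omega>))^2) + (1 - \<beta>) * mean T (\<lambda>\<omega>. (norm (SG k \<omega>))^2)"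
proof -
  have "mean T (\<lambda>\<omega>. (norm (Mom (Suc k) \<omega>))^2)
      \<le> mean T (\<lambda>\<omega>. \<beta> * (norm (Mom k \<omega>))^2 + (1 - \<beta>) * (norm (SG k \<omega>))^2)"
    by (rule path_mean_mono) (rule power2_norm_Mom_Suc_le)
  then show ?thesis
    by (simp only: path_mean_add path_mean_cmult)
qed

lemma mean_inner_grad_V_grad_W_ge:
  "mean T (\<lambda>\<omega>. (norm (grad (W (Suc k) \<omega>)))^2)
     - K * shift / (2 * sqrt c1) * mean T (\<lambda>\<omega>. (norm (Mom k \<omega>))^2)
     - K * shift * sqrt c1 / 2 * mean T (\<lambda>\<omega>. (norm (grad (W (Suc k) \<omega>)))^2)
   \<le> mean T (\<lambda>\<omega>. inner (grad (V k \<omega>)) (grad (W (Suc k) \<omega>)))"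
proof -
  have "mean T (\<lambda>\<omega>. (norm (grad (W (Suc k) \<omega>)))^2 - K * shift / (2 * sqrt c1) * (norm (Mom k \<omega>))^2
      - K * shift * sqrt c1 / 2 * (norm (grad (W (Suc k) \<omega>)))^2)
      \<le> mean T (\<lambda>\<omega>. inner (grad (V k \<omega>)) (grad (W (Suc k) \<omega>)))"
  proof (rule path_mean_mono)
    fix \<omega>
    show "(norm (grad (W (Suc k) \<omega>)))^2 - K * shift / (2 * sqrt c1) * (norm (Mom k \<omega>))^2
        - K * shift * sqrt c1 / 2 * (norm (grad (W (Suc k) \<omega>)))^2 \<le> inner (grad (V k \<omega>)) (grad (W (Suc k) \<omega>))"
      using inner_grad_V_grad_W_ge[of k \<omega>] by (simp add: algebra_simps)
  qed
  then show ?thesis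
    by (simp only: path_mean_diff path_mean_cmult)
qed

definition lyapunov :: "nat \<Rightarrow> nat \<Rightarrow> real" where
  "lyapunov T k = mean T (\<lambda>\<omega>. L (V k \<omega>)) + alpha * mean T (\<lambda>\<omega>. (norm (Mom k \<omega>))^2)"

lemma lyapunov_Suc_le:
  assumes "k < T"
  shows "lyapunov T (Suc k)
           \<le> lyapunov T k - \<eta> * delta * mean T (\<lambda>\<omega>. (norm (grad (W (Suc k) \<omega>)))^2)"
proof -
  define A where "A = mean T (\<lambda>\<omega>. L (V k \<omega>))"
  define P where "P = mean T (\<lambda>\<omega>. (norm (Mom k \<omega>))^2)"
  define G where "G = mean T (\<lambda>\<omega>. (norm (SG k \<omega>))^2)"
  define J where "J = mean T (\<lambda>\<omega>. inner (grad (V k \<omega>)) (grad (W (Suc k) \<omega>)))"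
  define a where "a = mean T (\<lambda>\<omega>. (norm (grad (W (Suc k) \<omega>)))^2)"
  define r where "r = sqrt c1"
  have r_pos: "0 < r" and c1_eq: "c1 = r^2" using c1_pos by (simp_all add: r_def)
  have L_step: "mean T (\<lambda>\<omega>. L (V (Suc k) \<omega>)) \<le> A - \<eta> * J + K / 2 * \<eta>^2 * G"
    using mean_L_V_Suc_le[OF assms] by (simp only: A_def J_def G_def)
  have Mom_step: "mean T (\<lambda>\<omega>. (norm (Mom (Suc k) \<omega>))^2) \<le> \<beta> * P + (1 - \<beta>) * G"
    using mean_power2_norm_Mom_Suc_le by (simp only: P_def G_def)
  have J_ge: "a - K * shift / (2 * r) * P - K * shift * r / 2 * a \<le> J"
    using mean_inner_grad_V_grad_W_ge by (simp only: a_def P_def J_def r_def)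
  have G_le: "G \<le> r^2 * a"
    using mean_power2_norm_SG_le[OF assms] by (simp add: G_def a_def c1_eq)
  have alpha_eq: "alpha * (1 - \<beta>) = \<eta> * K * shift / (2 * r)"
    unfolding alpha_def r_def[symmetric] using beta_less_1 by simp
  have delta_eq: "\<eta> * delta = \<eta> - \<eta> * K * shift * r - K / 2 * \<eta>^2 * r^2"
    unfolding delta_def r_def[symmetric] c1_eq
    using beta_less_1 r_pos by (simp add: shift_def field_simps power2_eq_square)
  define coef where "coef = K / 2 * \<eta>^2 + alpha * (1 - \<beta>)"
  have coef_nonneg: "0 \<le> coef"
    using K_nonneg alpha_nonneg beta_less_1 by (simp add: coef_def)
  have P_coef: "\<eta> * (K * shift / (2 * r)) = alpha * (1 - \<beta>)"
    using alpha_eq by simp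
  have a_coef: "coef * r^2 = K / 2 * \<eta>^2 * r^2 + \<eta> * (K * shift * r / 2)"
  proof -
    have "alpha * (1 - \<beta>) * r^2 = \<eta> * (K * shift * r / 2)"
      unfolding alpha_eq using r_pos by (simp add: power2_eq_square)
    then show ?thesis by (simp add: coef_def algebra_simps)
  qed
  have "lyapunov T (Suc k) \<le> A - \<eta> * J + K / 2 * \<eta>^2 * G + alpha * (\<beta> * P + (1 - \<beta>) * G)"
    using L_step mult_left_mono[OF Mom_step alpha_nonneg] unfolding lyapunov_def by linarith
  also have "\<dots> = A + alpha * \<beta> * P - \<eta> * J + coef * G"
    by (simp add: coef_def algebra_simps)
  also have "\<dots> \<le> A + alpha * \<beta> * P - \<eta> * (a - K * shift / (2 * r) * P - K * shift * r / 2 * a)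
                  + coef * (r^2 * a)"
    using mult_left_mono[OF J_ge less_imp_le[OF eta_pos]] mult_left_mono[OF G_le coef_nonneg]
    by linarith
  also have "\<dots> = A + alpha * \<beta> * P + \<eta> * (K * shift / (2 * r)) * P
                  - \<eta> * a + \<eta> * (K * shift * r / 2) * a + coef * r^2 * a"
    by (simp add: algebra_simps)
  also have "\<dots> = A + alpha * P - \<eta> * delta * a"
    unfolding P_coef a_coef delta_eq by (simp add: algebra_simps)
  finally show ?thesis by (simp add: lyapunov_def A_def P_def a_def)
qed

lemma sum_mean_power2_norm_grad_le:
  "(\<Sum>k<T. mean T (\<lambda>\<omega>. (norm (grad (W (Suc k) \<omega>)))^2)) \<le> L w0 / (\<eta> * delta)"
proof -
  have "\<eta> * delta * (\<Sum>k<T. mean T (\<lambda>\<omega>. (norm (grad (W (Suc k) \<omega>)))^2))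
      \<le> (\<Sum>k<T. lyapunov T k - lyapunov T (Suc k))"
    unfolding sum_distrib_left
  proof (rule sum_mono)
    fix k assume "k \<in> {..<T}"
    then show "\<eta> * delta * mean T (\<lambda>\<omega>. (norm (grad (W (Suc k) \<omega>)))^2) \<le> lyapunov T k - lyapunov T (Suc k)"
      using lyapunov_Suc_le[of k T] by simp
  qed
  also have "\<dots> = lyapunov T 0 - lyapunov T T"
    by (rule sum_lessThan_telescope')
  also have "\<dots> \<le> L w0"
  proof -
    have "0 \<le> lyapunov T T"
      unfolding lyapunov_def using alpha_nonneg
      by (intro add_nonneg_nonneg mult_nonneg_nonneg path_mean_nonneg L_nonneg) auto
    moreover have "lyapunov T 0 = L w0"
      by (simp add: lyapunov_def V_0 Mom_0 path_mean_const finite_batches batches_nonempty b_le_N)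
    ultimately show ?thesis by simp
  qed
  finally show ?thesis
    using eta_pos delta_pos by (simp add: field_simps mult.commute)
qed

lemma nn_integral_grad_W_path_mean:
  assumes "k \<le> T"
  shows "\<exists>s\<in>borel_measurable (batch_space N b).
           (AE \<omega> in batch_space N b. ennreal ((norm (grad (W (Suc k) \<omega>)))^2) = s \<omega>)
           \<and> integral\<^sup>N (batch_space N b) s = ennreal (mean T (\<lambda>\<omega>. (norm (grad (W (Suc k) \<omega>)))^2))"
  unfolding batch_space_def
proof (rule nn_integral_PiM_uniform_path_mean[OF finite_batches batches_nonempty[OF b_le_N]])
  show "depends_upto T (\<lambda>\<omega>. (norm (grad (W (Suc k) \<omega>)))^2)"
    using depends_upto_comp[OF depends_upto_V_W, of k "\<lambda>z. (norm (grad (snd z)))^2"] assms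
    by (auto intro: depends_upto_mono)
qed simp

lemma suminf_nn_integral_grad_W_finite:
  "(\<Sum>k. \<integral>\<^sup>+\<omega>. ennreal ((norm (grad (W (Suc k) \<omega>)))^2) \<partial>batch_space N b) < \<infinity>"
proof -
  have partial_sums: "(\<Sum>k<T. \<integral>\<^sup>+\<omega>. ennreal ((norm (grad (W (Suc k) \<omega>)))^2) \<partial>batch_space N b)
      \<le> ennreal (L w0 / (\<eta> * delta))" for T
  proof -
    have "(\<Sum>k<T. \<integral>\<^sup>+\<omega>. ennreal ((norm (grad (W (Suc k) \<omega>)))^2) \<partial>batch_space N b)
        = (\<Sum>k<T. ennreal (mean T (\<lambda>\<omega>. (norm (grad (W (Suc k) \<omega>)))^2)))"
    proof (rule sum.cong[OF refl])
      fix k assume "k \<in> {..<T}"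
      then obtain s where "AE \<omega> in batch_space N b. ennreal ((norm (grad (W (Suc k) \<omega>)))^2) = s \<omega>"
        and "integral\<^sup>N (batch_space N b) s = ennreal (mean T (\<lambda>\<omega>. (norm (grad (W (Suc k) \<omega>)))^2))"
        using nn_integral_grad_W_path_mean[of k T] by auto
      then show "(\<integral>\<^sup>+\<omega>. ennreal ((norm (grad (W (Suc k) \<omega>)))^2) \<partial>batch_space N b)
          = ennreal (mean T (\<lambda>\<omega>. (norm (grad (W (Suc k) \<omega>)))^2))"
        by (simp add: nn_integral_cong_AE)
    qed
    also have "\<dots> = ennreal (\<Sum>k<T. mean T (\<lambda>\<omega>. (norm (grad (W (Suc k) \<omega>)))^2))"
      by (rule sum_ennreal) (simp add: path_mean_nonneg)
    also have "\<dots> \<le> ennreal (L w0 / (\<eta> * delta))"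
      by (rule ennreal_leI) (rule sum_mean_power2_norm_grad_le)
    finally show ?thesis .
  qed
  have "(\<Sum>k. \<integral>\<^sup>+\<omega>. ennreal ((norm (grad (W (Suc k) \<omega>)))^2) \<partial>batch_space N b)
      \<le> ennreal (L w0 / (\<eta> * delta))"
    by (rule suminf_le_const[OF summableI partial_sums])
  also have "\<dots> < \<infinity>" by simp
  finally show ?thesis .
qed

lemma AE_summable_grad_and_margins_to_top:
  assumes limsup: "Limsup at_bot (\<lambda>u. ereal (dl u)) < 0"
  shows "AE \<omega> in batch_space N b. summable (\<lambda>k. (norm (grad (W (Suc k) \<omega>)))^2)
           \<and> (\<forall>i<N. filterlim (\<lambda>t. inner (W t \<omega>) (x i)) at_top sequentially)"
proof -
  have "AE \<omega> in batch_space N b. summable (\<lambda>k. (norm (grad (W (Suc k) \<omega>)))^2)"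
  proof (rule AE_summable_if_suminf_nn_integral_finite[OF _ _ suminf_nn_integral_grad_W_finite])
    fix k
    show "\<exists>s\<in>borel_measurable (batch_space N b).
        AE \<omega> in batch_space N b. ennreal ((norm (grad (W (Suc k) \<omega>)))^2) = s \<omega>"
      using nn_integral_grad_W_path_mean[of k k] by blast
  qed simp
  then show ?thesis
  proof eventually_elim
    case (elim \<omega>)
    have "filterlim (\<lambda>t. inner (W t \<omega>) (x i)) at_top sequentially" if "i < N" for i
      using tendsto_at_top_if_summable_grad[OF limsup elim that]
      by (rule filterlim_sequentially_Suc[THEN iffD1])
    then show ?case using elim by blast
  qed
qed

end

lemma (in separable_smooth_loss) step_size_bound_eq:
  assumes "\<beta> < 1"
  shows "H * \<beta> * \<sigma> ^ 3 / (sqrt (real N * real b) * (1 / norm wh) * (1 - \<beta>))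
           + H * \<sigma> ^ 4 / (2 * real b * (1 / norm wh)\<^sup>2)
       = K * \<beta> * sqrt c1 / (1 - \<beta>) + K * c1 / 2"
proof -
  have n_pos: "0 < norm wh" using margin_ge_1[of 0] N_pos by auto
  have sqrt_c1: "sqrt c1 = \<sigma> * norm wh * sqrt (real N) / sqrt (real b)"
    using sigma_pos n_pos by (simp add: c1_def real_sqrt_mult real_sqrt_divide)
  have sqrt_N_sq: "sqrt (real N) * (sqrt (real N) * y) = real N * y" for y
    by (simp add: mult.assoc[symmetric])
  have "K * \<beta> * sqrt c1 / (1 - \<beta>) = H * \<beta> * \<sigma> ^ 3 / (sqrt (real N * real b) * (1 / norm wh) * (1 - \<beta>))"
    unfolding sqrt_c1 K_def using assms n_pos N_pos b_pos
    by (simp add: real_sqrt_mult field_simps power3_eq_cube power2_eq_square) (simp add: sqrt_N_sq algebra_simps)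
  moreover have "K * c1 / 2 = H * \<sigma> ^ 4 / (2 * real b * (1 / norm wh)\<^sup>2)"
    using N_pos b_pos by (simp add: K_def c1_def field_simps power2_eq_square power4_eq_xxxx)
  ultimately show ?thesis by simp
qed

theorem mainTheorem13:
  fixes x :: "nat \<Rightarrow> 'a::euclidean_space"
    and N b :: nat
    and l dl :: "real \<Rightarrow> real"
    and H \<beta> \<eta> :: real
    and w0 :: 'a
  assumes N: "N \<ge> 1" and b: "1 \<le> b" "b \<le> N"
    and A1: "\<exists>w. \<forall>i<N. inner w (x i) > 0"
    and A2_deriv: "\<And>u. (l has_real_derivative dl u) (at u)"
    and A2_neg: "\<And>u. dl u < 0"
    and A2_lim: "(l \<longlongrightarrow> 0) at_top" "(dl \<longlongrightarrow> 0) at_top"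
    and A2_limsup: "Limsup at_bot (\<lambda>u. ereal (dl u)) < 0"
    and A2_tail: "\<exists>\<mu>p xp \<mu>m xm. \<mu>p > 0 \<and> xp > 0 \<and> \<mu>m > 0 \<and> xm > 0 \<and>
        (\<forall>u>xp. - dl u \<le> (1 + exp (- \<mu>p * u)) * exp (- u)) \<and>
        (\<forall>u>xm. - dl u \<ge> (1 - exp (- \<mu>m * u)) * exp (- u))"
    and A3: "\<And>u v. \<bar>dl u - dl v\<bar> \<le> H * \<bar>u - v\<bar>"
    and beta: "0 \<le> \<beta>" "\<beta> < 1"
    and eta: "0 < \<eta>"
      "\<eta> < inverse (H * \<beta> * (sigma_max N x) ^ 3 / (sqrt (real N * real b) * margin N x * (1 - \<beta>))
                     + H * (sigma_max N x) ^ 4 / (2 * real b * (margin N x)\<^sup>2))"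
  shows "(\<Sum>t. \<integral>\<^sup>+ \<omega>. ennreal ((norm (full_grad dl N x (sgdm_w dl b x \<beta> \<eta> w0 \<omega> (Suc t))))\<^sup>2)
            \<partial>batch_space N b) < \<infinity>
     \<and> (AE \<omega> in batch_space N b.
          summable (\<lambda>t. (norm (full_grad dl N x (sgdm_w dl b x \<beta> \<eta> w0 \<omega> (Suc t))))\<^sup>2)
          \<and> (\<forall>i<N. filterlim (\<lambda>t. inner (sgdm_w dl b x \<beta> \<eta> w0 \<omega> t) (x i)) at_top sequentially))"
proof -
  interpret loss: separable_smooth_loss x N b l dl H "sigma_max N x" "max_margin N x"
    using N b A2_deriv A2_neg A2_lim(1) A3 max_margin_ge_1[OF A1] sigma_max_bound
    by unfold_locales auto
  define X where "X = loss.K * \<beta> * sqrt loss.c1 / (1 - \<beta>) + loss.K * loss.c1 / 2"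
  have "\<eta> < inverse X"
    using eta(2) loss.step_size_bound_eq[OF beta(2)] by (simp add: X_def margin_def)
  then have "\<eta> * X < 1"
    using eta(1) mult_nonneg_nonpos[of \<eta> X] by (cases "0 < X") (auto simp: field_simps)
  then interpret sgdm x N b l dl H "sigma_max N x" "max_margin N x" \<beta> \<eta> w0
    using beta eta(1) by unfold_locales (auto simp: X_def)
  show ?thesis
    using suminf_nn_integral_grad_W_finite AE_summable_grad_and_margins_to_top[OF A2_limsup]
    by (simp add: W_def)
qed

end
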